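(* Let $\mathbf{X},\mathbf{Y},\mathbf{Z}$ be finite non-empty sets and let $P$ be a positive probability measure on $\mathbf{X}\times\mathbf{Y}\times\mathbf{Z}$, i.e. $P(x,y,z)>0$ for all $(x,y,z)$. Let $(X_n,Y_n,Z_n)$, $n=1,\dots,N$, be independent random elements of $\mathbf{X}\times\mathbf{Y}\times\mathbf{Z}$, each distributed according to $P$, where $N\ge1$ is fixed. Fix $\delta>0$, $\tilde x\in\mathbf{X}$ and $y\in\mathbf{Y}$, and define the parameter \[ P(y\mid\mathrm{do}(\tilde x)):=\sum_{z\in\mathbf{Z}}P(Y=y\mid X=\tilde x,Z=z)\,P(Z=z). \] Let $m:=\sum_{z\in\mathbf{Z}}\hat p(y\mid\tilde x,z)\,\hat p(z)$ and \[ h:=|\mathbf{Z}|\sqrt{\frac{\ln\frac{4|\mathbf{Z}|}{\delta}}{2N}}+\sum_{z\in\mathbf{Z}}\sqrt{\frac{\ln\frac{4|\mathbf{Z}|}{\delta}}{2\,\#\tilde x z}}, \] where $h:=\infty$ if $\#\tilde x z=0$ for some $z$. Then $[m-h,m+h]$ is a $(1-\delta)$-confidence interval for $P(y\mid\mathrm{do}(\tilde x))$, i.e. $\mathbb{P}\bigl(P(y\mid\mathrm{do}(\tilde x))\in[m-h,m+h]\bigr)\ge1-\delta$.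
   Context: Counting notation: for values $x,y,z$, $\#z:=|\{n\in[N]:Z_n=z\}|$, $\#\tilde x z:=|\{n\in[N]:(X_n,Z_n)=(\tilde x,z)\}|$, $\#\tilde x yz:=|\{n\in[N]:(X_n,Y_n,Z_n)=(\tilde x,y,z)\}|$. The estimates are $\hat p(z):=\#z/N$ and $\hat p(y\mid\tilde x,z):=\#\tilde x y z/\#\tilde x z$. Here $X$, $Y$, $Z$ may each be tuples of variables of a causal dag (e.g. $Z=(Z^1,\dots,Z^k)$ with $\mathbf{Z}=\mathbf{Z}^1\times\dots\times\mathbf{Z}^k$, so $|\mathbf{Z}|=|\mathbf{Z}^1|\cdots|\mathbf{Z}^k|$); the parameter is the causal effect of $X$ on $Y$ when $Z$ satisfies Pearl's back-door criterion relative to $(X,Y)$, but the claim concerns only the displayed quantity. *)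

theory Defs
  imports "HOL-Probability.Probability"
begin

definition probZ :: "('x \<times> 'y \<times> 'z) pmf \<Rightarrow> 'z \<Rightarrow> real" where
  "probZ P z = measure_pmf.prob P {t. snd (snd t) = z}"

definition cond_prob_Y :: "('x \<times> 'y \<times> 'z) pmf \<Rightarrow> 'y \<Rightarrow> 'x \<Rightarrow> 'z \<Rightarrow> real" where
  "cond_prob_Y P y x z =
     measure_pmf.prob P {t. t = (x, y, z)} / measure_pmf.prob P {t. fst t = x \<and> snd (snd t) = z}"

definition causal_effect :: "('x \<times> 'y \<times> 'z::finite) pmf \<Rightarrow> 'x \<Rightarrow> 'y \<Rightarrow> real" where
  "causal_effect P x y = (\<Sum>z\<in>UNIV. cond_prob_Y P y x z * probZ P z)"

definition cnt_z :: "nat \<Rightarrow> (nat \<Rightarrow> 'x \<times> 'y \<times> 'z) \<Rightarrow> 'z \<Rightarrow> nat" where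
  "cnt_z N \<omega> z = card {n\<in>{..<N}. snd (snd (\<omega> n)) = z}"

definition cnt_xz :: "nat \<Rightarrow> (nat \<Rightarrow> 'x \<times> 'y \<times> 'z) \<Rightarrow> 'x \<Rightarrow> 'z \<Rightarrow> nat" where
  "cnt_xz N \<omega> x z = card {n\<in>{..<N}. fst (\<omega> n) = x \<and> snd (snd (\<omega> n)) = z}"

definition cnt_xyz :: "nat \<Rightarrow> (nat \<Rightarrow> 'x \<times> 'y \<times> 'z) \<Rightarrow> 'x \<Rightarrow> 'y \<Rightarrow> 'z \<Rightarrow> nat" where
  "cnt_xyz N \<omega> x y z = card {n\<in>{..<N}. \<omega> n = (x, y, z)}"

definition est_effect :: "nat \<Rightarrow> (nat \<Rightarrow> 'x \<times> 'y \<times> 'z::finite) \<Rightarrow> 'x \<Rightarrow> 'y \<Rightarrow> real" where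
  "est_effect N \<omega> x y =
     (\<Sum>z\<in>UNIV. (real (cnt_xyz N \<omega> x y z) / real (cnt_xz N \<omega> x z)) * (real (cnt_z N \<omega> z) / real N))"

text \<open>Half-width h (finite case; h = \<infinity> is handled separately when some count is 0).\<close>

definition half_width :: "real \<Rightarrow> nat \<Rightarrow> (nat \<Rightarrow> 'x \<times> 'y \<times> 'z::finite) \<Rightarrow> 'x \<Rightarrow> real" where
  "half_width \<delta> N \<omega> x =
     (let L = ln (4 * real CARD('z) / \<delta>) in
       real CARD('z) * sqrt (L / (2 * real N))
       + (\<Sum>z\<in>UNIV. sqrt (L / (2 * real (cnt_xz N \<omega> x z)))))"

definition covers :: "('x \<times> 'y \<times> 'z::finite) pmf \<Rightarrow> real \<Rightarrow> nat \<Rightarrow> 'x \<Rightarrow> 'y \<Rightarrow> (nat \<Rightarrow> 'x \<times> 'y \<times> 'z) \<Rightarrow> bool" where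
  "covers P \<delta> N x y \<omega> =
     ((\<exists>z. cnt_xz N \<omega> x z = 0) \<or>
      (est_effect N \<omega> x y - half_width \<delta> N \<omega> x \<le> causal_effect P x y \<and>
       causal_effect P x y \<le> est_effect N \<omega> x y + half_width \<delta> N \<omega> x))"

end

theory Submission
  imports Defs
begin

text \<open>
  On the event that, for every \<open>z\<close>, \<open>#z / N\<close> lies within \<open>sqrt (ln (4|Z|/\<delta>) / 2N)\<close> of
  \<open>P(Z = z)\<close> and \<open>#xyz / #xz\<close> lies within \<open>sqrt (ln (4|Z|/\<delta>) / 2#xz)\<close> of \<open>P(y | x, z)\<close>,
  the estimate \<open>m\<close> is within \<open>h\<close> of the causal effect, since all factors of the products
  lie in \<open>[0, 1]\<close>. By Hoeffding's inequality for binomial counts each of these \<open>2|Z|\<close>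
  deviation events has probability at most \<open>\<delta> / 2|Z|\<close>, and a union bound finishes.
  For \<open>#xyz / #xz\<close> the sample size \<open>#xz\<close> is itself random; but conditionally on which
  indices \<open>n\<close> have \<open>(X\<^sub>n, Z\<^sub>n) = (x, z)\<close>, the corresponding \<open>Y\<^sub>n\<close> are i.i.d. with
  law \<open>P(\<cdot> | x, z)\<close>, so Hoeffding applies conditionally.
\<close>

lemma measure_cond_pmf:
  assumes "set_pmf p \<inter> s \<noteq> {}"
  shows "measure_pmf.prob (cond_pmf p s) X = measure_pmf.prob p (s \<inter> X) / measure_pmf.prob p s"
proof -
  from assms obtain t where "t \<in> set_pmf p" "t \<in> s" by blast
  then have "measure_pmf.prob p s > 0" by (rule measure_pmf_posI)
  then have "emeasure (measure_pmf p) s \<noteq> 0" by (simp add: measure_pmf.emeasure_eq_measure)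
  then show ?thesis
    using assms by (simp add: cond_pmf.rep_eq measure_uniform_measure)
qed

lemma map_pmf_eq_bernoulli_pmf:
  "map_pmf Q p = bernoulli_pmf (measure_pmf.prob p {t. Q t})"
proof (rule pmf_eqI)
  fix b :: bool
  have "measure_pmf.prob p {t. \<not> Q t} = 1 - measure_pmf.prob p {t. Q t}"
    using measure_pmf.prob_compl[of "{t. Q t}" p] by (simp add: Compl_eq_Diff_UNIV[symmetric] Collect_neg_eq)
  then show "pmf (map_pmf Q p) b = pmf (bernoulli_pmf (measure_pmf.prob p {t. Q t})) b"
    by (cases b) (simp_all add: pmf_map vimage_def)
qed

lemma measure_bind_pmf_le:
  assumes "\<And>x. x \<in> set_pmf M \<Longrightarrow> measure_pmf.prob (N x) X \<le> c" and "c \<ge> 0"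
  shows "measure_pmf.prob (bind_pmf M N) X \<le> c"
proof -
  have "emeasure (bind_pmf M N) X = (\<integral>\<^sup>+x. emeasure (N x) X \<partial>M)" by simp
  also have "\<dots> \<le> (\<integral>\<^sup>+x. ennreal c \<partial>M)"
    by (intro nn_integral_mono_AE) (auto simp: AE_measure_pmf_iff measure_pmf.emeasure_eq_measure assms)
  also have "\<dots> = ennreal c" by (simp add: measure_pmf.emeasure_space_1)
  finally show ?thesis by (simp add: measure_pmf.emeasure_eq_measure assms)
qed

lemma measure_Pi_pmf_subset:
  assumes "finite T" "S \<subseteq> T" and "\<And>f. ((\<lambda>n. if n \<in> S then f n else d) \<in> E) = (f \<in> E)"
  shows "measure_pmf.prob (Pi_pmf T d q) E = measure_pmf.prob (Pi_pmf S d q) E"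
proof -
  have "(\<lambda>f n. if n \<in> S then f n else d) -` E = E" using assms(3) by auto
  then show ?thesis by (simp add: Pi_pmf_subset[OF assms(1,2)])
qed

lemma map_Pi_pmf_card_eq_binomial_pmf:
  assumes "finite T"
  shows "map_pmf (\<lambda>\<omega>. card {n\<in>T. Q (\<omega> n)}) (Pi_pmf T d (\<lambda>_. p)) =
         binomial_pmf (card T) (measure_pmf.prob p {t. Q t})"
proof -
  have "map_pmf (\<lambda>\<omega>. card {n\<in>T. Q (\<omega> n)}) (Pi_pmf T d (\<lambda>_. p)) =
        map_pmf (\<lambda>f. card {n\<in>T. f n}) (map_pmf (\<lambda>\<omega>. Q \<circ> \<omega>) (Pi_pmf T d (\<lambda>_. p)))"
    by (simp add: pmf.map_comp o_def)
  also have "map_pmf (\<lambda>\<omega>. Q \<circ> \<omega>) (Pi_pmf T d (\<lambda>_. p)) = Pi_pmf T (Q d) (\<lambda>_. map_pmf Q p)"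
    by (rule Pi_pmf_map[symmetric]) (use assms in auto)
  also have "\<dots> = Pi_pmf T (Q d) (\<lambda>_. bernoulli_pmf (measure_pmf.prob p {t. Q t}))"
    by (simp add: map_pmf_eq_bernoulli_pmf)
  also have "map_pmf (\<lambda>f. card {n\<in>T. f n}) \<dots> = binomial_pmf (card T) (measure_pmf.prob p {t. Q t})"
    by (rule binomial_pmf_altdef'[symmetric]) (use assms in auto)
  finally show ?thesis .
qed

lemma Pi_pmf_frequency_deviation:
  assumes "finite T" "T \<noteq> {}" "L \<ge> 0"
  shows "measure_pmf.prob (Pi_pmf T d (\<lambda>_. p))
           {\<omega>. sqrt (L / (2 * real (card T))) \<le>
                \<bar>real (card {n\<in>T. Q (\<omega> n)}) / real (card T) - measure_pmf.prob p {t. Q t}\<bar>}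
         \<le> 2 * exp (- L)"
proof -
  let ?q = "measure_pmf.prob p {t. Q t}" and ?k = "card T"
  let ?\<epsilon> = "sqrt (L / (2 * real ?k))"
  have k: "?k > 0" using assms by (simp add: card_gt_0_iff)
  interpret binomial_distribution ?k ?q by unfold_locales auto
  have "measure_pmf.prob (Pi_pmf T d (\<lambda>_. p))
           {\<omega>. ?\<epsilon> \<le> \<bar>real (card {n\<in>T. Q (\<omega> n)}) / real ?k - ?q\<bar>}
        = measure_pmf.prob (map_pmf (\<lambda>\<omega>. card {n\<in>T. Q (\<omega> n)}) (Pi_pmf T d (\<lambda>_. p)))
           {j. ?\<epsilon> \<le> \<bar>real j / real ?k - ?q\<bar>}"
    by simp
  also have "\<dots> = measure_pmf.prob (binomial_pmf ?k ?q) {j. ?\<epsilon> \<le> \<bar>real j / real ?k - ?q\<bar>}"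
    by (simp only: map_Pi_pmf_card_eq_binomial_pmf[OF assms(1)])
  also have "\<dots> \<le> 2 * exp (-2 * ?k * ?\<epsilon>\<^sup>2)"
    by (rule prob_abs_ge'[OF k]) (use assms in simp)
  also have "\<dots> = 2 * exp (- L)" using assms(3) k by simp
  finally show ?thesis .
qed

lemma Pi_pmf_eq_bind_cond_pmf:
  assumes "finite T"
  shows "Pi_pmf T d (\<lambda>_. p) =
         bind_pmf (Pi_pmf T False (\<lambda>_. map_pmf A p)) (\<lambda>bs. Pi_pmf T d (\<lambda>n. cond_pmf p {t. A t = bs n}))"
proof -
  have "bind_pmf (map_pmf A p) (\<lambda>b. cond_pmf p {t. A t = b}) = p"
    by (rule bind_cond_pmf_cancel) (auto simp: vimage_def)
  then have "Pi_pmf T d (\<lambda>_. p) = Pi_pmf T d (\<lambda>_. bind_pmf (map_pmf A p) (\<lambda>b. cond_pmf p {t. A t = b}))"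
    by simp
  also have "\<dots> = bind_pmf (Pi_pmf T False (\<lambda>_. map_pmf A p)) (\<lambda>bs. Pi_pmf T d (\<lambda>n. cond_pmf p {t. A t = bs n}))"
    by (rule Pi_pmf_bind[OF assms])
  finally show ?thesis .
qed

lemma Pi_pmf_conditional_frequency_deviation:
  assumes "finite T" "L \<ge> 0"
  shows "measure_pmf.prob (Pi_pmf T d (\<lambda>_. p))
           {\<omega>. card {n\<in>T. A (\<omega> n)} > 0 \<and>
                sqrt (L / (2 * real (card {n\<in>T. A (\<omega> n)}))) \<le>
                \<bar>real (card {n\<in>T. A (\<omega> n) \<and> Q (\<omega> n)}) / real (card {n\<in>T. A (\<omega> n)})
                  - measure_pmf.prob p {t. A t \<and> Q t} / measure_pmf.prob p {t. A t}\<bar>}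
         \<le> 2 * exp (- L)" (is "measure_pmf.prob _ ?E \<le> _")
  unfolding Pi_pmf_eq_bind_cond_pmf[OF assms(1), where A = A]
proof (rule measure_bind_pmf_le)
  fix bs assume bs: "bs \<in> set_pmf (Pi_pmf T False (\<lambda>_. map_pmf A p))"
  define M where "M = Pi_pmf T d (\<lambda>n. cond_pmf p {t. A t = bs n})"
  define S where "S = {n\<in>T. bs n}"
  have nonempty: "set_pmf p \<inter> {t. A t = bs n} \<noteq> {}" if "n \<in> T" for n
    using bs that by (auto simp: set_Pi_pmf[OF assms(1)] PiE_dflt_def)
  have A_eq_bs: "A (\<omega> n) = bs n" if "\<omega> \<in> set_pmf M" "n \<in> T" for \<omega> n
  proof -
    have "\<omega> n \<in> set_pmf (cond_pmf p {t. A t = bs n})"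
      using that by (auto simp: M_def set_Pi_pmf[OF assms(1)] PiE_dflt_def)
    then show ?thesis using nonempty[OF that(2)] by simp
  qed
  have count_A: "{n\<in>T. A (\<omega> n)} = S" and count_AQ: "{n\<in>T. A (\<omega> n) \<and> Q (\<omega> n)} = {n\<in>S. Q (\<omega> n)}"
    if "\<omega> \<in> set_pmf M" for \<omega>
    using A_eq_bs[OF that] by (auto simp: S_def)
  show "measure_pmf.prob M ?E \<le> 2 * exp (- L)"
  proof (cases "S = {}")
    case True
    have "?E \<inter> set_pmf M = {}" using True by (auto simp: count_A)
    then show ?thesis using measure_Int_set_pmf[of M ?E] by simp
  next
    case False
    then obtain n0 where "n0 \<in> T" "bs n0" by (auto simp: S_def)
    with nonempty have A_nonempty: "set_pmf p \<inter> {t. A t} \<noteq> {}" by fastforce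
    let ?p' = "cond_pmf p {t. A t}"
    define E' where "E' = {\<omega>. sqrt (L / (2 * real (card S))) \<le>
       \<bar>real (card {n\<in>S. Q (\<omega> n)}) / real (card S) - measure_pmf.prob ?p' {t. Q t}\<bar>}"
    have "measure_pmf.prob ?p' {t. Q t} = measure_pmf.prob p {t. A t \<and> Q t} / measure_pmf.prob p {t. A t}"
      using A_nonempty by (simp add: measure_cond_pmf Collect_conj_eq)
    moreover have "card S > 0" using False assms(1) by (simp add: S_def card_gt_0_iff)
    ultimately have "?E \<inter> set_pmf M = E' \<inter> set_pmf M"
      by (auto simp: E'_def count_A count_AQ)
    then have "measure_pmf.prob M ?E = measure_pmf.prob M E'"
      using measure_Int_set_pmf[of M ?E] measure_Int_set_pmf[of M E'] by simp
    also have "\<dots> = measure_pmf.prob (Pi_pmf S d (\<lambda>n. cond_pmf p {t. A t = bs n})) E'"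
      unfolding M_def by (rule measure_Pi_pmf_subset) (auto simp: assms S_def E'_def cong: conj_cong)
    also have "Pi_pmf S d (\<lambda>n. cond_pmf p {t. A t = bs n}) = Pi_pmf S d (\<lambda>_. ?p')"
      by (rule Pi_pmf_cong) (auto simp: S_def)
    also have "measure_pmf.prob \<dots> E' \<le> 2 * exp (- L)"
      unfolding E'_def by (rule Pi_pmf_frequency_deviation) (use assms False in \<open>auto simp: S_def\<close>)
    finally show ?thesis .
  qed
qed simp

lemma abs_sum_mult_diff_le:
  fixes c c' w w' e :: "'i \<Rightarrow> real"
  assumes "finite I"
    and "\<And>i. i \<in> I \<Longrightarrow> \<bar>c' i - c i\<bar> \<le> e i" "\<And>i. i \<in> I \<Longrightarrow> \<bar>w' i - w i\<bar> \<le> \<epsilon>"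
    and "\<And>i. i \<in> I \<Longrightarrow> 0 \<le> w' i \<and> w' i \<le> 1" "\<And>i. i \<in> I \<Longrightarrow> 0 \<le> c i \<and> c i \<le> 1"
  shows "\<bar>(\<Sum>i\<in>I. c' i * w' i) - (\<Sum>i\<in>I. c i * w i)\<bar> \<le> real (card I) * \<epsilon> + (\<Sum>i\<in>I. e i)"
proof -
  have "\<bar>(\<Sum>i\<in>I. c' i * w' i) - (\<Sum>i\<in>I. c i * w i)\<bar> \<le> (\<Sum>i\<in>I. \<bar>c' i * w' i - c i * w i\<bar>)"
    by (simp flip: sum_subtractf add: sum_abs)
  also have "\<dots> \<le> (\<Sum>i\<in>I. e i + \<epsilon>)"
  proof (rule sum_mono)
    fix i assume i: "i \<in> I"
    have "c' i * w' i - c i * w i = (c' i - c i) * w' i + c i * (w' i - w i)" by algebra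
    then have "\<bar>c' i * w' i - c i * w i\<bar> \<le> \<bar>c' i - c i\<bar> * w' i + c i * \<bar>w' i - w i\<bar>"
      using assms(4,5)[OF i] by (simp add: abs_mult abs_triangle_ineq[THEN order_trans])
    also have "\<dots> \<le> e i * 1 + 1 * \<epsilon>"
      using assms(2-5)[OF i] by (intro add_mono mult_mono) auto
    finally show "\<bar>c' i * w' i - c i * w i\<bar> \<le> e i + \<epsilon>" by simp
  qed
  also have "\<dots> = real (card I) * \<epsilon> + (\<Sum>i\<in>I. e i)" by (simp add: sum.distrib)
  finally show ?thesis .
qed

lemma cnt_z_le: "cnt_z N \<omega> z \<le> N"
  unfolding cnt_z_def using card_mono[OF finite_lessThan, of "{n\<in>{..<N}. snd (snd (\<omega> n)) = z}" N] by auto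

lemma cond_prob_Y_nonneg: "0 \<le> cond_prob_Y P y x z"
  by (simp add: cond_prob_Y_def)

lemma cond_prob_Y_le_1: "cond_prob_Y P y x z \<le> 1"
proof -
  have "measure_pmf.prob P {t. t = (x, y, z)} \<le> measure_pmf.prob P {t. fst t = x \<and> snd (snd t) = z}"
    by (rule measure_pmf.finite_measure_mono) auto
  then show ?thesis
    unfolding cond_prob_Y_def by (auto simp: divide_le_eq_1 zero_less_measure_iff)
qed

lemma prob_cnt_z_deviation:
  assumes "N \<ge> 1" "L \<ge> 0"
  shows "measure_pmf.prob (Pi_pmf {..<N} d (\<lambda>_. P))
           {\<omega>. sqrt (L / (2 * real N)) \<le> \<bar>real (cnt_z N \<omega> z) / real N - probZ P z\<bar>}
         \<le> 2 * exp (- L)"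
  using Pi_pmf_frequency_deviation[of "{..<N}" L d P "\<lambda>t. snd (snd t) = z"] assms
  by (simp add: cnt_z_def probZ_def lessThan_empty_iff)

lemma prob_cnt_xyz_deviation:
  fixes P :: "('x \<times> 'y \<times> 'z) pmf"
  assumes "L \<ge> 0"
  shows "measure_pmf.prob (Pi_pmf {..<N} d (\<lambda>_. P))
           {\<omega>. cnt_xz N \<omega> x z > 0 \<and> sqrt (L / (2 * real (cnt_xz N \<omega> x z))) \<le>
                \<bar>real (cnt_xyz N \<omega> x y z) / real (cnt_xz N \<omega> x z) - cond_prob_Y P y x z\<bar>}
         \<le> 2 * exp (- L)"
proof -
  have "{t. (fst t = x \<and> snd (snd t) = z) \<and> fst (snd t) = y} = {t. t = (x, y, z)}"
    by auto
  moreover have "{n\<in>{..<N}. (fst (\<omega> n) = x \<and> snd (snd (\<omega> n)) = z) \<and> fst (snd (\<omega> n)) = y}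
      = {n\<in>{..<N}. \<omega> n = (x, y, z)}" for \<omega> :: "nat \<Rightarrow> 'x \<times> 'y \<times> 'z"
    by (auto simp: prod_eq_iff)
  ultimately show ?thesis
    using Pi_pmf_conditional_frequency_deviation[of "{..<N}" L d P
        "\<lambda>t. fst t = x \<and> snd (snd t) = z" "\<lambda>t. fst (snd t) = y"] assms
    by (simp add: cnt_xz_def cnt_xyz_def cond_prob_Y_def)
qed

definition deviation_event ::
    "nat \<Rightarrow> real \<Rightarrow> ('x \<times> 'y \<times> 'z) pmf \<Rightarrow> 'x \<Rightarrow> 'y \<Rightarrow> 'z \<Rightarrow> (nat \<Rightarrow> 'x \<times> 'y \<times> 'z) set" where
  "deviation_event N L P x y z =
     {\<omega>. sqrt (L / (2 * real N)) \<le> \<bar>real (cnt_z N \<omega> z) / real N - probZ P z\<bar>} \<union>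
     {\<omega>. cnt_xz N \<omega> x z > 0 \<and> sqrt (L / (2 * real (cnt_xz N \<omega> x z))) \<le>
          \<bar>real (cnt_xyz N \<omega> x y z) / real (cnt_xz N \<omega> x z) - cond_prob_Y P y x z\<bar>}"

lemma prob_deviation_event_le:
  assumes "N \<ge> 1" "L \<ge> 0"
  shows "measure_pmf.prob (Pi_pmf {..<N} d (\<lambda>_. P)) (deviation_event N L P x y z) \<le> 4 * exp (- L)"
  unfolding deviation_event_def
  using prob_cnt_z_deviation[OF assms, where d = d and P = P and z = z]
    prob_cnt_xyz_deviation[OF assms(2), where d = d and P = P and N = N and x = x and y = y and z = z]
  by (intro measure_subadditive[THEN order_trans]) (auto simp: measure_pmf.emeasure_eq_measure)

lemma covers_if_no_deviation:
  fixes \<omega> :: "nat \<Rightarrow> 'x \<times> 'y \<times> 'z::finite"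
    and \<delta> :: real
  defines "L \<equiv> ln (4 * real CARD('z) / \<delta>)"
  assumes "N \<ge> 1" and no_deviation: "\<And>z. \<omega> \<notin> deviation_event N L P x y z"
  shows "covers P \<delta> N x y \<omega>"
proof (cases "\<exists>z. cnt_xz N \<omega> x z = 0")
  case False
  then have cnt_xz_pos: "cnt_xz N \<omega> x z > 0" for z by auto
  have close_z: "\<bar>real (cnt_z N \<omega> z) / real N - probZ P z\<bar> \<le> sqrt (L / (2 * real N))"
    and close_xyz: "\<bar>real (cnt_xyz N \<omega> x y z) / real (cnt_xz N \<omega> x z) - cond_prob_Y P y x z\<bar>
                      \<le> sqrt (L / (2 * real (cnt_xz N \<omega> x z)))" for z
    using no_deviation[of z] cnt_xz_pos[of z] by (auto simp: deviation_event_def)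
  have "\<bar>est_effect N \<omega> x y - causal_effect P x y\<bar> \<le> half_width \<delta> N \<omega> x"
    unfolding est_effect_def causal_effect_def half_width_def Let_def L_def[symmetric]
  proof (rule abs_sum_mult_diff_le)
    show "0 \<le> real (cnt_z N \<omega> z) / real N \<and> real (cnt_z N \<omega> z) / real N \<le> 1" for z
      using cnt_z_le[of N \<omega> z] assms(2) by simp
  qed (use close_z close_xyz cond_prob_Y_nonneg cond_prob_Y_le_1 in auto)
  then show ?thesis by (auto simp: covers_def abs_le_iff)
qed (simp add: covers_def)

theorem theorem1:
  fixes P :: "('x::finite \<times> 'y::finite \<times> 'z::finite) pmf"
    and N :: nat and \<delta> :: real and x :: 'x and y :: 'y
  assumes pos: "\<And>t. pmf P t > 0"
    and N: "N \<ge> 1"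
    and \<delta>: "\<delta> > 0"
  shows "measure_pmf.prob (Pi_pmf {..<N} undefined (\<lambda>_. P)) {\<omega>. covers P \<delta> N x y \<omega>} \<ge> 1 - \<delta>"
proof (cases "\<delta> < 1")
  case True
  define \<Omega> where "\<Omega> = Pi_pmf {..<N} undefined (\<lambda>_. P)"
  define K where "K = real CARD('z)"
  define L where "L = ln (4 * K / \<delta>)"
  have "K \<ge> 1" by (simp add: K_def)
  then have L: "L \<ge> 0" and exp_L: "4 * exp (- L) = \<delta> / K"
    using \<delta> True by (simp_all add: L_def exp_minus field_simps)
  have "- {\<omega>. covers P \<delta> N x y \<omega>} \<subseteq> (\<Union>z. deviation_event N L P x y z)"
    using covers_if_no_deviation[OF N, where \<delta> = \<delta> and P = P and x = x and y = y]
    unfolding L_def K_def by blast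
  then have "measure_pmf.prob \<Omega> (- {\<omega>. covers P \<delta> N x y \<omega>})
      \<le> measure_pmf.prob \<Omega> (\<Union>z. deviation_event N L P x y z)"
    by (rule measure_pmf.finite_measure_mono) simp
  also have "\<dots> \<le> (\<Sum>z\<in>UNIV. measure_pmf.prob \<Omega> (deviation_event N L P x y z))"
    by (rule measure_pmf.finite_measure_subadditive_finite) auto
  also have "\<dots> \<le> (\<Sum>z\<in>(UNIV :: 'z set). \<delta> / K)"
    unfolding \<Omega>_def exp_L[symmetric] by (intro sum_mono prob_deviation_event_le[OF N L])
  also have "\<dots> = \<delta>" using \<open>K \<ge> 1\<close> by (simp add: K_def)
  finally show ?thesis
    using measure_pmf.prob_compl[of "{\<omega>. covers P \<delta> N x y \<omega>}" \<Omega>] by (simp add: \<Omega>_def Compl_eq_Diff_UNIV)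
qed (smt (verit) measure_nonneg)

end
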